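(* Let $m\ge1$, $M=2^m$, $N\ge1$, and let bit probabilities $P_{C_0}(0),\ldots,P_{C_{m-1}}(0)\in(0,1)$ be given, with $P_{C_k}(1)=1-P_{C_k}(0)$. Let $\mathbb{X}$ be a matrix with rows $\boldsymbol{x}_0,\ldots,\boldsymbol{x}_{M-1}\in\mathbb{R}^N$ and let $\mathring{\mathbb{X}}$ be its transform, with rows $\mathring{\boldsymbol{x}}_i=\sum_{j=0}^{M-1}\boldsymbol{x}_j\gamma_{i,j}\sqrt{P_j}$. Then for every $j=0,\ldots,M-1$, $$\boldsymbol{x}_j=\frac{1}{M\sqrt{P_j}}\sum_{i=0}^{M-1}\mathring{\boldsymbol{x}}_i\gamma_{i,j}.$$
   Context: For an integer $0\le i\le M-1$, $n_{i,k}\in\{0,1\}$ denotes the $k$-th bit of its base-2 representation ($i=\sum_k n_{i,k}2^k$); $\bar b=1-b$ for a bit $b$. The symbol probabilities are $P_i=\prod_{k=0}^{m-1}P_{C_k}(n_{i,k})$. The coefficients are $$\gamma_{i,j}=\prod_{k=0}^{m-1}\Big[(-1)^{\bar n_{i,k}n_{j,k}}\sqrt{P_{C_k}(0)}+(-1)^{n_{i,k}\bar n_{j,k}}\sqrt{P_{C_k}(1)}\Big].$$ *)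

theory Defs
  imports "HOL-Analysis.Analysis"
begin

definition nbit :: "nat \<Rightarrow> nat \<Rightarrow> nat" where
  "nbit i k = (i div 2 ^ k) mod 2"

definition PC :: "(nat \<Rightarrow> real) \<Rightarrow> nat \<Rightarrow> nat \<Rightarrow> real" where
  "PC p0 k b = (if b = 0 then p0 k else 1 - p0 k)"

definition Psym :: "nat \<Rightarrow> (nat \<Rightarrow> real) \<Rightarrow> nat \<Rightarrow> real" where
  "Psym m p0 i = (\<Prod>k<m. PC p0 k (nbit i k))"

definition gamma :: "nat \<Rightarrow> (nat \<Rightarrow> real) \<Rightarrow> nat \<Rightarrow> nat \<Rightarrow> real" where
  "gamma m p0 i j = (\<Prod>k<m.
      (-1) ^ ((1 - nbit i k) * nbit j k) * sqrt (PC p0 k 0)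
    + (-1) ^ (nbit i k * (1 - nbit j k)) * sqrt (PC p0 k 1))"

definition xring :: "nat \<Rightarrow> (nat \<Rightarrow> real) \<Rightarrow> (nat \<Rightarrow> real ^ 'n) \<Rightarrow> nat \<Rightarrow> real ^ 'n" where
  "xring m p0 x i = (\<Sum>j<2 ^ m. (gamma m p0 i j * sqrt (Psym m p0 j)) *\<^sub>R x j)"

end

theory Submission imports Defs begin

text \<open>The matrix \<open>\<gamma>\<close> is the Kronecker product of the \<open>m\<close> matrices
  \<open>(\<gamma>\<^sub>k(b,c))\<^sub>b\<^sub>,\<^sub>c\<close>, \<open>\<gamma>\<^sub>k(b,c) = (-1)\<^bsup>(1-b)c\<^esup>\<surd>P\<^sub>C\<^sub>k(0) + (-1)\<^bsup>b(1-c)\<^esup>\<surd>P\<^sub>C\<^sub>k(1)\<close>.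
  Each factor has orthogonal columns of squared norm \<open>P\<^sub>C\<^sub>k(0) + P\<^sub>C\<^sub>k(1) + P\<^sub>C\<^sub>k(0) + P\<^sub>C\<^sub>k(1) = 2\<close>,
  hence \<open>\<gamma>\<^sup>T\<gamma> = M\<cdot>I\<close>. Since the transform is \<open>\<gamma> \<cdot> diag(\<surd>P\<^sub>j) \<cdot> X\<close>, applying
  \<open>\<gamma>\<^sup>T\<close> to it recovers \<open>M\<surd>P\<^sub>j x\<^sub>j\<close>.\<close>

lemma nbit_cases: "nbit i k = 0 \<or> nbit i k = 1"
  unfolding nbit_def by auto

lemma nbit_eq_0_if_less: "i < 2 ^ m \<Longrightarrow> nbit i m = 0"
  unfolding nbit_def by (simp add: div_less)

lemma nbit_add_power_self: "i < 2 ^ m \<Longrightarrow> nbit (i + 2 ^ m) m = 1"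
  unfolding nbit_def by (simp add: div_add_self2 div_less)

lemma nbit_add_power_below:
  assumes "i < 2 ^ m" "k < m"
  shows "nbit (i + 2 ^ m) k = nbit i k"
proof -
  obtain d where d: "m - k = Suc d"
    using assms(2) by (metis Suc_diff_Suc)
  have "(2::nat) ^ m = 2 ^ k * (2 * 2 ^ d)"
    using assms(2) d by (metis power_Suc power_add le_add_diff_inverse less_imp_le)
  then have "(i + 2 ^ m) div 2 ^ k = i div 2 ^ k + 2 * 2 ^ d"
    by simp
  then show ?thesis
    unfolding nbit_def by simp
qed

lemma nbit_inject:
  assumes "j < 2 ^ m" "j' < 2 ^ m" "\<forall>k<m. nbit j k = nbit j' k"
  shows "j = j'"
proof -
  have "bit j k = bit j' k" for k
  proof (cases "k < m")
    case True
    then show ?thesis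
      using assms(3) unfolding nbit_def bit_nat_def by (simp add: even_iff_mod_2_eq_zero)
  next
    case False
    then have "j < 2 ^ k" "j' < 2 ^ k"
      using assms(1,2) by (meson dual_order.strict_trans2 not_less one_le_numeral power_increasing)+
    then show ?thesis
      by (simp add: bit_nat_def div_less)
  qed
  then show ?thesis
    by (simp add: bit_eq_iff)
qed

lemma sum_lessThan_power2_Suc:
  fixes g :: "nat \<Rightarrow> 'a::comm_monoid_add"
  shows "(\<Sum>i<2 ^ Suc m. g i) = (\<Sum>i<2 ^ m. g i) + (\<Sum>i<2 ^ m. g (i + 2 ^ m))"
proof -
  have "(\<Sum>i<2 ^ Suc m. g i) = (\<Sum>i\<in>{0..<2 ^ m}. g i) + (\<Sum>i\<in>{2 ^ m..<2 ^ m + 2 ^ m}. g i)"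
    by (simp add: lessThan_atLeast0 sum.atLeastLessThan_concat mult_2)
  also have "(\<Sum>i\<in>{2 ^ m..<2 ^ m + 2 ^ m}. g i) = (\<Sum>i\<in>{0..<2 ^ m}. g (i + 2 ^ m))"
    using sum.shift_bounds_nat_ivl[of g 0 "2 ^ m" "2 ^ m"] by simp
  finally show ?thesis
    by (simp add: lessThan_atLeast0)
qed

lemma sum_prod_nbit:
  fixes f :: "nat \<Rightarrow> nat \<Rightarrow> 'a::comm_semiring_1"
  shows "(\<Sum>i<2 ^ m. \<Prod>k<m. f k (nbit i k)) = (\<Prod>k<m. f k 0 + f k 1)"
proof (induction m)
  case 0
  then show ?case by simp
next
  case (Suc m)
  have high_bits: "(\<Prod>k<m. f k (nbit (i + 2 ^ m) k)) = (\<Prod>k<m. f k (nbit i k))" if "i < 2 ^ m" for i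
    using that by (intro prod.cong) (simp_all add: nbit_add_power_below)
  have "(\<Sum>i<2 ^ Suc m. \<Prod>k<Suc m. f k (nbit i k))
      = (\<Sum>i<2 ^ m. (\<Prod>k<m. f k (nbit i k)) * f m 0) + (\<Sum>i<2 ^ m. (\<Prod>k<m. f k (nbit i k)) * f m 1)"
    unfolding sum_lessThan_power2_Suc
    by (intro arg_cong2[where f = "(+)"] sum.cong refl)
      (simp_all add: nbit_eq_0_if_less nbit_add_power_self high_bits)
  also have "\<dots> = (\<Prod>k<Suc m. f k 0 + f k 1)"
    by (simp only: sum_distrib_right[symmetric] Suc.IH prod.lessThan_Suc distrib_left)
  finally show ?case .
qed

definition gamma_bit :: "real \<Rightarrow> nat \<Rightarrow> nat \<Rightarrow> real" where
  "gamma_bit p b c = (-1) ^ ((1 - b) * c) * sqrt p + (-1) ^ (b * (1 - c)) * sqrt (1 - p)"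

lemma gamma_eq_prod_gamma_bit:
  "gamma m p0 i j = (\<Prod>k<m. gamma_bit (p0 k) (nbit i k) (nbit j k))"
  unfolding gamma_def gamma_bit_def PC_def by simp

lemma gamma_bit_orthogonal:
  assumes "0 \<le> p" "p \<le> 1" "c = 0 \<or> c = 1" "d = 0 \<or> d = 1"
  shows "gamma_bit p 0 c * gamma_bit p 0 d + gamma_bit p 1 c * gamma_bit p 1 d = (if c = d then 2 else 0)"
proof -
  have "sqrt p * sqrt p = p" "sqrt (1 - p) * sqrt (1 - p) = 1 - p"
    using assms(1,2) by simp_all
  then show ?thesis
    using assms(3,4) unfolding gamma_bit_def by (auto simp: algebra_simps)
qed

lemma gamma_orthogonal:
  assumes p0: "\<And>k. k < m \<Longrightarrow> 0 \<le> p0 k \<and> p0 k \<le> 1" and "j < 2 ^ m" "j' < 2 ^ m"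
  shows "(\<Sum>i<2 ^ m. gamma m p0 i j * gamma m p0 i j') = (if j = j' then 2 ^ m else 0)"
proof -
  have "(\<Sum>i<2 ^ m. gamma m p0 i j * gamma m p0 i j')
      = (\<Sum>i<2 ^ m. \<Prod>k<m. (\<lambda>k b. gamma_bit (p0 k) b (nbit j k) * gamma_bit (p0 k) b (nbit j' k)) k (nbit i k))"
    unfolding gamma_eq_prod_gamma_bit by (simp add: prod.distrib)
  also have "\<dots> = (\<Prod>k<m. gamma_bit (p0 k) 0 (nbit j k) * gamma_bit (p0 k) 0 (nbit j' k)
                        + gamma_bit (p0 k) 1 (nbit j k) * gamma_bit (p0 k) 1 (nbit j' k))"
    by (rule sum_prod_nbit)
  also have "\<dots> = (\<Prod>k<m. if nbit j k = nbit j' k then 2 else 0)"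
    using p0 by (intro prod.cong refl gamma_bit_orthogonal nbit_cases) auto
  also have "\<dots> = (if j = j' then 2 ^ m else 0)"
    using nbit_inject[OF assms(2,3)] by auto
  finally show ?thesis .
qed

lemma orthogonal_columns_inversion:
  fixes G :: "'i \<Rightarrow> 'j \<Rightarrow> real" and x :: "'j \<Rightarrow> 'a::real_vector"
  assumes "finite J" "j \<in> J"
    and orth: "\<And>j'. j' \<in> J \<Longrightarrow> (\<Sum>i\<in>I. G i j * G i j') = (if j = j' then c else 0)"
  shows "(\<Sum>i\<in>I. G i j *\<^sub>R (\<Sum>j'\<in>J. (G i j' * w j') *\<^sub>R x j')) = (c * w j) *\<^sub>R x j"
proof -
  have "(\<Sum>i\<in>I. G i j *\<^sub>R (\<Sum>j'\<in>J. (G i j' * w j') *\<^sub>R x j'))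
      = (\<Sum>j'\<in>J. ((\<Sum>i\<in>I. G i j * G i j') * w j') *\<^sub>R x j')"
    unfolding scaleR_sum_right scaleR_sum_left sum_distrib_right
    by (subst sum.swap) (simp add: mult.assoc)
  also have "\<dots> = (\<Sum>j'\<in>J. (if j' = j then c * w j else 0) *\<^sub>R x j')"
    using orth by (intro sum.cong) auto
  also have "\<dots> = (c * w j) *\<^sub>R x j"
    using assms(1,2) by (simp add: if_distrib[of "\<lambda>a. a *\<^sub>R x _"] cong: if_cong)
  finally show ?thesis .
qed

lemma Psym_pos:
  assumes "\<And>k. k < m \<Longrightarrow> 0 < p0 k \<and> p0 k < 1"
  shows "0 < Psym m p0 j"
  unfolding Psym_def PC_def using assms by (intro prod_pos) auto

theorem theorem1:
  fixes m :: nat and p0 :: "nat \<Rightarrow> real" and x :: "nat \<Rightarrow> real ^ 'n"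
  assumes "m \<ge> 1"
    and "\<And>k. k < m \<Longrightarrow> 0 < p0 k \<and> p0 k < 1"
  shows "\<forall>j < 2 ^ m. x j =
     (1 / (real (2 ^ m) * sqrt (Psym m p0 j))) *\<^sub>R
       (\<Sum>i<2 ^ m. gamma m p0 i j *\<^sub>R xring m p0 x i)"
proof (intro allI impI)
  fix j :: nat
  assume j: "j < 2 ^ m"
  have "(\<Sum>i<2 ^ m. gamma m p0 i j *\<^sub>R xring m p0 x i) = (2 ^ m * sqrt (Psym m p0 j)) *\<^sub>R x j"
    unfolding xring_def
    using assms(2) j by (intro orthogonal_columns_inversion gamma_orthogonal) (auto simp: less_imp_le)
  moreover have "0 < Psym m p0 j"
    using assms(2) by (rule Psym_pos)
  ultimately show "x j = (1 / (real (2 ^ m) * sqrt (Psym m p0 j))) *\<^sub>R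
       (\<Sum>i<2 ^ m. gamma m p0 i j *\<^sub>R xring m p0 x i)"
    by simp
qed

end
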